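(* Assume the Gaussian setting (G) described in the context. There exists a positive constant $K$ such that $$\mathbb{P}\Big(\forall\lambda,\lambda'\in[\lambda_{\min},\lambda_{\max}]:\ \mathcal{C}_{\lambda'}(\hat w_R(\lambda))\le\mathcal{C}_{\lambda'}(\hat w_R(\lambda'))+K|\lambda-\lambda'|\Big)=1-o(1).$$
   Context: Asymptotic regime: sequence indexed by $n$, $p=p(n)$, $p/n\to\delta\in(0,\infty)$. Data $y=X\beta+\sigma z$, deterministic $\beta$; $K$ depends only on $\delta,\sigma_{\max},\lambda_{\min},\lambda_{\max}$. Gaussian setting (G): $X_{ij}$ i.i.d. $\mathcal{N}(0,1)$; $z_i$ i.i.d. $\mathcal{N}(0,1)$ independent of $X$, $\sigma^2\le\sigma_{\max}^2$; $\|\beta\|_2^2\to\sigma_\beta^2\le\sigma_{\max}^2<\infty$; $0<\lambda_{\min}\le\lambda_{\max}<\infty$. $\mathcal{C}_\lambda(w)=\frac{1}{2n}\|Xw-\sigma z\|_2^2+\frac{\lambda}{2}\|w+\beta\|_2^2$, and $\hat w_R(\lambda)=\hat\beta_R(\lambda)-\beta$, where $\hat\beta_R(\lambda)=\arg\min_b\frac1{2n}\|y-Xb\|_2^2+\frac{\lambda}{2}\|b\|_2^2$ (so $\hat w_R(\lambda)$ minimizes $\mathcal{C}_\lambda$). *)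

theory Defs
  imports "HOL-Probability.Probability"
begin

text \<open>Vectors in R^p are represented as functions nat => real, only indices j < p matter;
  n x p matrices as nat => nat => real (indices i < n, j < p).\<close>

definition N01 :: "real measure" where
  "N01 = density lborel std_normal_density"

text \<open>Index set of the randomness: entries X_ij (i<n, j<p) and noise z_i (i<n).\<close>
definition gauss_idx :: "nat \<Rightarrow> nat \<Rightarrow> ((nat \<times> nat) + nat) set" where
  "gauss_idx n p = Inl ` ({..<n} \<times> {..<p}) \<union> Inr ` {..<n}"

definition gauss_meas :: "nat \<Rightarrow> nat \<Rightarrow> ((nat \<times> nat) + nat \<Rightarrow> real) measure" where
  "gauss_meas n p = PiM (gauss_idx n p) (\<lambda>_. N01)"

definition Xof :: "((nat \<times> nat) + nat \<Rightarrow> real) \<Rightarrow> nat \<Rightarrow> nat \<Rightarrow> real" where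
  "Xof \<omega> i j = \<omega> (Inl (i, j))"

definition zof :: "((nat \<times> nat) + nat \<Rightarrow> real) \<Rightarrow> nat \<Rightarrow> real" where
  "zof \<omega> i = \<omega> (Inr i)"

definition resp :: "nat \<Rightarrow> (nat \<Rightarrow> nat \<Rightarrow> real) \<Rightarrow> (nat \<Rightarrow> real) \<Rightarrow> real \<Rightarrow> (nat \<Rightarrow> real) \<Rightarrow> nat \<Rightarrow> real" where
  "resp p X \<beta> \<sigma> z i = (\<Sum>j<p. X i j * \<beta> j) + \<sigma> * z i"

definition ridge_obj :: "nat \<Rightarrow> nat \<Rightarrow> (nat \<Rightarrow> nat \<Rightarrow> real) \<Rightarrow> (nat \<Rightarrow> real) \<Rightarrow> real \<Rightarrow> (nat \<Rightarrow> real) \<Rightarrow> real" where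
  "ridge_obj n p X y lam b =
     (\<Sum>i<n. (y i - (\<Sum>j<p. X i j * b j))\<^sup>2) / (2 * real n) + lam / 2 * (\<Sum>j<p. (b j)\<^sup>2)"

definition ridge :: "nat \<Rightarrow> nat \<Rightarrow> (nat \<Rightarrow> nat \<Rightarrow> real) \<Rightarrow> (nat \<Rightarrow> real) \<Rightarrow> real \<Rightarrow> nat \<Rightarrow> real" where
  "ridge n p X y lam = (THE b. (\<forall>j\<ge>p. b j = 0) \<and>
      (\<forall>b'. (\<forall>j\<ge>p. b' j = 0) \<longrightarrow> ridge_obj n p X y lam b \<le> ridge_obj n p X y lam b'))"

definition costC :: "nat \<Rightarrow> nat \<Rightarrow> (nat \<Rightarrow> nat \<Rightarrow> real) \<Rightarrow> (nat \<Rightarrow> real) \<Rightarrow> real \<Rightarrow> (nat \<Rightarrow> real)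
    \<Rightarrow> real \<Rightarrow> (nat \<Rightarrow> real) \<Rightarrow> real" where
  "costC n p X z \<sigma> \<beta> lam w =
     (\<Sum>i<n. ((\<Sum>j<p. X i j * w j) - \<sigma> * z i)\<^sup>2) / (2 * real n) + lam / 2 * (\<Sum>j<p. (w j + \<beta> j)\<^sup>2)"

definition what :: "nat \<Rightarrow> nat \<Rightarrow> (nat \<Rightarrow> nat \<Rightarrow> real) \<Rightarrow> (nat \<Rightarrow> real) \<Rightarrow> real \<Rightarrow> (nat \<Rightarrow> real)
    \<Rightarrow> real \<Rightarrow> nat \<Rightarrow> real" where
  "what n p X z \<sigma> \<beta> lam = (\<lambda>j. ridge n p X (resp p X \<beta> \<sigma> z) lam j - \<beta> j)"

end

theory Submission
  imports Defs "Jordan_Normal_Form.Determinant"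
begin

text \<open>
  The cost \<open>C\<^sub>\<lambda>'(w\<^sub>R(\<lambda>))\<close> is the ridge objective at penalty \<open>\<lambda>'\<close> evaluated at the ridge estimate for
  \<open>\<lambda>\<close>, and changing the penalty from \<open>\<lambda>\<close> to \<open>\<lambda>'\<close> only adds \<open>(\<lambda>' - \<lambda>)/2\<close> times the squared norm of the
  argument. Since the estimate for \<open>\<lambda>\<close> minimises the \<open>\<lambda>\<close>-objective, its \<open>\<lambda>'\<close>-cost exceeds the optimal
  one by at most \<open>|\<lambda> - \<lambda>'|/2\<close> times the difference of the squared norms of the two estimates, and
  each of these is at most \<open>\<parallel>y\<parallel>\<^sup>2 / (n \<lambda>\<^sub>m\<^sub>i\<^sub>n)\<close>. So the claim holds with \<open>K = M / (2 \<lambda>\<^sub>m\<^sub>i\<^sub>n)\<close> on the event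
  \<open>\<parallel>y\<parallel>\<^sup>2 \<le> n M\<close>. The responses are independent centred normals of variance \<open>\<parallel>\<beta>\<parallel>\<^sup>2 + \<sigma>\<^sup>2\<close>, which is
  eventually below \<open>M = 2 \<sigma>\<^sub>m\<^sub>a\<^sub>x\<^sup>2 + 1\<close>, so by Chebyshev's inequality that event fails with probability
  \<open>O(1/n)\<close>.

  The event of the theorem is measurable because the ridge estimate is a ratio of determinants
  (Cramer's rule): it is measurable in the data and continuous in the penalty, so the
  quantifiers over \<open>[\<lambda>\<^sub>m\<^sub>i\<^sub>n, \<lambda>\<^sub>m\<^sub>a\<^sub>x]\<close> may be restricted to a countable dense set.
\<close>

section \<open>Ridge regression as a linear system\<close>

lemma mult_vec_adj_mat_solution:
  fixes A :: "'a::field mat"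
  assumes A: "A \<in> carrier_mat m m" and d: "det A \<noteq> 0" and b: "b \<in> carrier_vec m"
  shows "A *\<^sub>v ((1 / det A) \<cdot>\<^sub>v (adj_mat A *\<^sub>v b)) = b"
proof -
  have adj: "adj_mat A \<in> carrier_mat m m" "A * adj_mat A = det A \<cdot>\<^sub>m 1\<^sub>m m"
    using adj_mat[OF A] by auto
  have "A *\<^sub>v ((1 / det A) \<cdot>\<^sub>v (adj_mat A *\<^sub>v b)) = (1 / det A) \<cdot>\<^sub>v ((A * adj_mat A) *\<^sub>v b)"
    using A adj b by (simp add: mult_mat_vec assoc_mult_mat_vec[symmetric])
  also have "\<dots> = (1 / det A) \<cdot>\<^sub>v (det A \<cdot>\<^sub>v (1\<^sub>m m *\<^sub>v b))"
    using adj(2) b by auto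
  also have "\<dots> = b"
    using b d by (simp add: smult_smult_assoc)
  finally show ?thesis .
qed

lemma cramer_rule:
  fixes A :: "'a::field mat"
  assumes A: "A \<in> carrier_mat m m" and d: "det A \<noteq> 0" and x: "x \<in> carrier_vec m" and k: "k < m"
  shows "x $ k = det (replace_col A (A *\<^sub>v x) k) / det A"
  using cramer_lemma_mat[OF A x k] d by simp


definition gram :: "nat \<Rightarrow> (nat \<Rightarrow> nat \<Rightarrow> real) \<Rightarrow> nat \<Rightarrow> nat \<Rightarrow> real" where
  "gram n X j k = (\<Sum>i<n. X i j * X i k) / real n"

definition normal_rhs :: "nat \<Rightarrow> (nat \<Rightarrow> nat \<Rightarrow> real) \<Rightarrow> (nat \<Rightarrow> real) \<Rightarrow> nat \<Rightarrow> real" where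
  "normal_rhs n X y j = (\<Sum>i<n. X i j * y i) / real n"

definition ridge_mat :: "nat \<Rightarrow> nat \<Rightarrow> (nat \<Rightarrow> nat \<Rightarrow> real) \<Rightarrow> real \<Rightarrow> real mat" where
  "ridge_mat n p X lam = Matrix.mat p p (\<lambda>(j, k). gram n X j k + (if j = k then lam else 0))"

definition ridge_cramer :: "nat \<Rightarrow> nat \<Rightarrow> (nat \<Rightarrow> nat \<Rightarrow> real) \<Rightarrow> (nat \<Rightarrow> real) \<Rightarrow> real \<Rightarrow> nat \<Rightarrow> real"
  where
  "ridge_cramer n p X y lam j =
     (if j < p then det (replace_col (ridge_mat n p X lam) (Matrix.vec p (normal_rhs n X y)) j)
        / det (ridge_mat n p X lam)
      else 0)"

lemma ridge_mat_carrier [simp]: "ridge_mat n p X lam \<in> carrier_mat p p"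
  by (simp add: ridge_mat_def)

lemma dim_ridge_mat [simp]: "dim_row (ridge_mat n p X lam) = p" "dim_col (ridge_mat n p X lam) = p"
  by (simp_all add: ridge_mat_def)

lemma index_ridge_mat [simp]:
  "j < p \<Longrightarrow> k < p \<Longrightarrow> ridge_mat n p X lam $$ (j, k) = gram n X j k + (if j = k then lam else 0)"
  by (simp add: ridge_mat_def)

lemma index_ridge_mat_mult_vec:
  assumes "v \<in> carrier_vec p" "j < p"
  shows "(ridge_mat n p X lam *\<^sub>v v) $ j = (\<Sum>k<p. gram n X j k * v $ k) + lam * v $ j"
proof -
  have "(ridge_mat n p X lam *\<^sub>v v) $ j = (\<Sum>k<p. (gram n X j k + (if j = k then lam else 0)) * v $ k)"
    using assms by (simp add: ridge_mat_def scalar_prod_def lessThan_atLeast0)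
  also have "\<dots> = (\<Sum>k<p. gram n X j k * v $ k) + (\<Sum>k<p. if j = k then lam * v $ k else 0)"
    by (subst sum.distrib[symmetric]) (rule sum.cong, auto simp: algebra_simps)
  finally show ?thesis
    using assms by simp
qed

lemma gram_quadratic_form:
  "(\<Sum>j<p. v j * (\<Sum>k<p. gram n X j k * v k)) = (\<Sum>i<n. (\<Sum>j<p. X i j * v j)\<^sup>2) / real n"
proof -
  have "(\<Sum>i<n. (\<Sum>j<p. X i j * v j)\<^sup>2) = (\<Sum>i<n. \<Sum>j<p. \<Sum>k<p. v j * (X i j * X i k) * v k)"
    by (simp add: power2_eq_square sum_product algebra_simps)
  also have "\<dots> = (\<Sum>j<p. \<Sum>k<p. \<Sum>i<n. v j * (X i j * X i k) * v k)"
    by (simp add: sum.swap[of _ "{..<n}"])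
  also have "\<dots> = (\<Sum>j<p. v j * (\<Sum>k<p. (\<Sum>i<n. X i j * X i k) * v k))"
    by (simp add: sum_distrib_left sum_distrib_right algebra_simps)
  finally show ?thesis
    by (simp add: gram_def sum_divide_distrib[symmetric] sum_distrib_left algebra_simps)
qed

lemma det_ridge_mat_nonzero:
  assumes "lam > 0"
  shows "det (ridge_mat n p X lam) \<noteq> 0"
proof
  assume "det (ridge_mat n p X lam) = 0"
  then obtain v where v: "v \<in> carrier_vec p" "v \<noteq> 0\<^sub>v p" "ridge_mat n p X lam *\<^sub>v v = 0\<^sub>v p"
    using det_0_iff_vec_prod_zero[OF ridge_mat_carrier] by blast
  have "(\<Sum>k<p. gram n X j k * v $ k) + lam * v $ j = 0" if "j < p" for j
    using index_ridge_mat_mult_vec[OF v(1) that, of n X lam] v(3) that by simp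
  then have "(\<Sum>j<p. v $ j * ((\<Sum>k<p. gram n X j k * v $ k) + lam * v $ j)) = 0"
    by simp
  then have "(\<Sum>j<p. v $ j * (\<Sum>k<p. gram n X j k * v $ k)) + lam * (\<Sum>j<p. (v $ j)\<^sup>2) = 0"
    by (simp add: distrib_left sum.distrib sum_distrib_left power2_eq_square algebra_simps)
  moreover have "0 \<le> (\<Sum>j<p. v $ j * (\<Sum>k<p. gram n X j k * v $ k))"
    unfolding gram_quadratic_form by (simp add: sum_nonneg)
  moreover have "0 \<le> lam * (\<Sum>j<p. (v $ j)\<^sup>2)"
    using assms by (simp add: sum_nonneg)
  ultimately have "lam * (\<Sum>j<p. (v $ j)\<^sup>2) = 0"
    by (simp add: add_nonneg_eq_0_iff)
  then have "(\<Sum>j<p. (v $ j)\<^sup>2) = 0"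
    using assms by simp
  then have "\<forall>j\<in>{..<p}. (v $ j)\<^sup>2 = 0"
    by (subst (asm) sum_nonneg_eq_0_iff) auto
  then have "v = 0\<^sub>v p"
    using v(1) by (intro eq_vecI) auto
  with v(2) show False ..
qed

lemma ridge_cramer_normal_eq:
  assumes "lam > 0" "j < p"
  shows "(\<Sum>k<p. gram n X j k * ridge_cramer n p X y lam k) + lam * ridge_cramer n p X y lam j
    = normal_rhs n X y j"
proof -
  let ?A = "ridge_mat n p X lam" and ?r = "Matrix.vec p (normal_rhs n X y)"
  define x where "x = (1 / det ?A) \<cdot>\<^sub>v (adj_mat ?A *\<^sub>v ?r)"
  have d: "det ?A \<noteq> 0"
    using det_ridge_mat_nonzero[OF assms(1)] .
  have x: "x \<in> carrier_vec p"
    using adj_mat(1)[OF ridge_mat_carrier[of n p X lam]] unfolding x_def by simp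
  have Ax: "?A *\<^sub>v x = ?r"
    unfolding x_def by (rule mult_vec_adj_mat_solution) (simp_all add: d)
  have xk: "x $ k = ridge_cramer n p X y lam k" if "k < p" for k
  proof -
    have "x $ k = det (replace_col ?A (?A *\<^sub>v x) k) / det ?A"
      by (rule cramer_rule[OF ridge_mat_carrier d x that])
    then show ?thesis
      using that unfolding Ax ridge_cramer_def by simp
  qed
  have "(?A *\<^sub>v x) $ j = (\<Sum>k<p. gram n X j k * x $ k) + lam * x $ j"
    by (rule index_ridge_mat_mult_vec[OF x assms(2)])
  then show ?thesis
    using Ax assms(2) xk by simp
qed

lemma residual_cross_sum:
  fixes y b h :: "nat \<Rightarrow> real"
  shows "(\<Sum>i<n. (y i - (\<Sum>j<p. X i j * b j)) * (\<Sum>j<p. X i j * h j))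
   = (\<Sum>j<p. h j * ((\<Sum>i<n. X i j * y i) - (\<Sum>k<p. (\<Sum>i<n. X i j * X i k) * b k)))"
proof -
  have "(\<Sum>i<n. (y i - (\<Sum>j<p. X i j * b j)) * (\<Sum>j<p. X i j * h j))
      = (\<Sum>i<n. \<Sum>j<p. h j * (X i j * y i) - h j * (\<Sum>k<p. X i j * X i k * b k))"
  proof (rule sum.cong[OF refl])
    fix i
    have "(y i - (\<Sum>j<p. X i j * b j)) * (\<Sum>j<p. X i j * h j)
        = (\<Sum>j<p. h j * X i j * (y i - (\<Sum>k<p. X i k * b k)))"
      unfolding sum_distrib_left by (rule sum.cong[OF refl]) (simp add: algebra_simps)
    then show "(y i - (\<Sum>j<p. X i j * b j)) * (\<Sum>j<p. X i j * h j)
        = (\<Sum>j<p. h j * (X i j * y i) - h j * (\<Sum>k<p. X i j * X i k * b k))"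
      by (simp add: right_diff_distrib sum_distrib_left algebra_simps)
  qed
  also have "\<dots> = (\<Sum>j<p. \<Sum>i<n. h j * (X i j * y i) - h j * (\<Sum>k<p. X i j * X i k * b k))"
    by (rule sum.swap)
  also have "\<dots> = (\<Sum>j<p. h j * ((\<Sum>i<n. X i j * y i) - (\<Sum>i<n. \<Sum>k<p. X i j * X i k * b k)))"
    by (simp add: sum_subtractf sum_distrib_left right_diff_distrib)
  also have "\<dots> = (\<Sum>j<p. h j * ((\<Sum>i<n. X i j * y i) - (\<Sum>k<p. (\<Sum>i<n. X i j * X i k) * b k)))"
    by (simp add: sum.swap[of _ "{..<n}"] sum_distrib_right)
  finally show ?thesis .
qed

lemma ridge_obj_add:
  assumes "n > 0"
  shows "ridge_obj n p X y lam (\<lambda>j. b j + h j) = ridge_obj n p X y lam b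
     + (\<Sum>j<p. h j * ((\<Sum>k<p. gram n X j k * b k) + lam * b j - normal_rhs n X y j))
     + ridge_obj n p X (\<lambda>_. 0) lam h"
proof -
  define r where "r i = y i - (\<Sum>j<p. X i j * b j)" for i
  define q where "q i = (\<Sum>j<p. X i j * h j)" for i
  have fit: "(\<Sum>i<n. (y i - (\<Sum>j<p. X i j * (b j + h j)))\<^sup>2)
      = (\<Sum>i<n. (r i)\<^sup>2) - 2 * (\<Sum>i<n. r i * q i) + (\<Sum>i<n. (0 - q i)\<^sup>2)"
    by (simp add: r_def q_def distrib_left sum.distrib power2_eq_square algebra_simps
        sum_subtractf sum_distrib_left)
  have cross: "(\<Sum>i<n. r i * q i) = real n * (\<Sum>j<p. h j * (normal_rhs n X y j - (\<Sum>k<p. gram n X j k * b k)))"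
    using assms unfolding r_def q_def residual_cross_sum
    by (simp add: gram_def normal_rhs_def sum_distrib_left sum_divide_distrib right_diff_distrib algebra_simps)
  have penalty: "(\<Sum>j<p. (b j + h j)\<^sup>2) = (\<Sum>j<p. (b j)\<^sup>2) + 2 * (\<Sum>j<p. h j * b j) + (\<Sum>j<p. (h j)\<^sup>2)"
    by (simp add: power2_eq_square sum.distrib sum_distrib_left algebra_simps)
  show ?thesis
    using assms unfolding ridge_obj_def fit cross penalty r_def[symmetric] q_def[symmetric]
    by (simp add: field_simps sum_subtractf sum.distrib sum_distrib_left)
qed

lemma ridge_obj_nonneg: "0 \<le> lam \<Longrightarrow> 0 \<le> ridge_obj n p X y lam b"
  unfolding ridge_obj_def by (intro add_nonneg_nonneg divide_nonneg_nonneg mult_nonneg_nonneg sum_nonneg) auto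

lemma ridge_obj_stationary:
  assumes "n > 0"
    and "\<And>j. j < p \<Longrightarrow> (\<Sum>k<p. gram n X j k * b k) + lam * b j = normal_rhs n X y j"
  shows "ridge_obj n p X y lam b' = ridge_obj n p X y lam b + ridge_obj n p X (\<lambda>_. 0) lam (\<lambda>j. b' j - b j)"
proof -
  have "ridge_obj n p X y lam b' = ridge_obj n p X y lam (\<lambda>j. b j + (b' j - b j))"
    by simp
  also have "\<dots> = ridge_obj n p X y lam b
     + (\<Sum>j<p. (b' j - b j) * ((\<Sum>k<p. gram n X j k * b k) + lam * b j - normal_rhs n X y j))
     + ridge_obj n p X (\<lambda>_. 0) lam (\<lambda>j. b' j - b j)"
    by (rule ridge_obj_add[OF assms(1)])
  also have "(\<Sum>j<p. (b' j - b j) * ((\<Sum>k<p. gram n X j k * b k) + lam * b j - normal_rhs n X y j)) = 0"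
    using assms(2) by (intro sum.neutral) simp
  finally show ?thesis
    by simp
qed

lemma ridge_obj_zero_rhs_nonpos_imp_zero:
  assumes "lam > 0" "ridge_obj n p X (\<lambda>_. 0) lam h \<le> 0" "j < p"
  shows "h j = 0"
proof -
  have "0 \<le> (\<Sum>i<n. (0 - (\<Sum>j<p. X i j * h j))\<^sup>2) / (2 * real n)"
    by (intro divide_nonneg_nonneg sum_nonneg) auto
  then have "lam / 2 * (\<Sum>j<p. (h j)\<^sup>2) \<le> 0"
    using assms(2) unfolding ridge_obj_def by linarith
  then have "(\<Sum>j<p. (h j)\<^sup>2) = 0"
    using assms(1) by (simp add: mult_le_0_iff antisym sum_nonneg)
  then show "h j = 0"
    using assms(3) by (subst (asm) sum_nonneg_eq_0_iff) auto
qed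

lemma ridge_eq_ridge_cramer:
  assumes "n > 0" "lam > 0"
  shows "ridge n p X y lam = ridge_cramer n p X y lam"
  unfolding ridge_def
proof (rule the_equality)
  let ?b = "ridge_cramer n p X y lam"
  have expand: "ridge_obj n p X y lam b'
      = ridge_obj n p X y lam ?b + ridge_obj n p X (\<lambda>_. 0) lam (\<lambda>j. b' j - ?b j)" for b'
    by (rule ridge_obj_stationary[OF assms(1) ridge_cramer_normal_eq[OF assms(2)]])
  have min: "ridge_obj n p X y lam ?b \<le> ridge_obj n p X y lam b'" for b'
    using expand[of b'] ridge_obj_nonneg[of lam n p X "\<lambda>_. 0" "\<lambda>j. b' j - ?b j"] assms(2) by linarith
  have supp: "\<forall>j\<ge>p. ?b j = 0"
    by (simp add: ridge_cramer_def)
  show "(\<forall>j\<ge>p. ?b j = 0) \<and> (\<forall>b'. (\<forall>j\<ge>p. b' j = 0) \<longrightarrow> ridge_obj n p X y lam ?b \<le> ridge_obj n p X y lam b')"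
    using supp min by blast
  fix b
  assume b: "(\<forall>j\<ge>p. b j = 0) \<and> (\<forall>b'. (\<forall>j\<ge>p. b' j = 0) \<longrightarrow> ridge_obj n p X y lam b \<le> ridge_obj n p X y lam b')"
  then have "ridge_obj n p X y lam b \<le> ridge_obj n p X y lam ?b"
    using supp by blast
  then have Q: "ridge_obj n p X (\<lambda>_. 0) lam (\<lambda>j. b j - ?b j) \<le> 0"
    using expand[of b] by linarith
  have "b j - ?b j = 0" if "j < p" for j
    by (rule ridge_obj_zero_rhs_nonpos_imp_zero[OF assms(2) Q that])
  with b supp show "b = ?b"
    by (metis eq_iff_diff_eq_0 not_le ext)
qed

lemma ridge_obj_ridge_le:
  assumes "n > 0" "lam > 0"
  shows "ridge_obj n p X y lam (ridge n p X y lam) \<le> ridge_obj n p X y lam b"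
  using ridge_obj_stationary[OF assms(1) ridge_cramer_normal_eq[OF assms(2)], where b'=b]
    ridge_obj_nonneg[of lam n p X "\<lambda>_. 0"] assms
  unfolding ridge_eq_ridge_cramer[OF assms] by (metis le_add_same_cancel1 less_imp_le)

lemma ridge_obj_change_lambda:
  "ridge_obj n p X y lam' b = ridge_obj n p X y lam b + (lam' - lam) / 2 * (\<Sum>j<p. (b j)\<^sup>2)"
  unfolding ridge_obj_def by (simp add: field_simps)

lemma ridge_norm_le:
  assumes "n > 0" "lam > 0"
  shows "(\<Sum>j<p. (ridge n p X y lam j)\<^sup>2) \<le> (\<Sum>i<n. (y i)\<^sup>2) / (real n * lam)"
proof -
  let ?b = "ridge n p X y lam"
  have "ridge_obj n p X y lam ?b \<le> ridge_obj n p X y lam (\<lambda>_. 0)"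
    by (rule ridge_obj_ridge_le[OF assms])
  moreover have "ridge_obj n p X y lam (\<lambda>_. 0) = (\<Sum>i<n. (y i)\<^sup>2) / (2 * real n)"
    by (simp add: ridge_obj_def)
  moreover have "0 \<le> (\<Sum>i<n. (y i - (\<Sum>j<p. X i j * ?b j))\<^sup>2) / (2 * real n)"
    by (intro divide_nonneg_nonneg sum_nonneg) auto
  ultimately have "lam / 2 * (\<Sum>j<p. (?b j)\<^sup>2) \<le> (\<Sum>i<n. (y i)\<^sup>2) / (2 * real n)"
    unfolding ridge_obj_def by linarith
  then show ?thesis
    using assms by (simp add: field_simps)
qed

lemma ridge_obj_ridge_lipschitz:
  assumes "n > 0" "0 < lmin" "lmin \<le> lam" "lmin \<le> lam'"
  shows "ridge_obj n p X y lam' (ridge n p X y lam)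
    \<le> ridge_obj n p X y lam' (ridge n p X y lam') + (\<Sum>i<n. (y i)\<^sup>2) / (2 * real n * lmin) * \<bar>lam - lam'\<bar>"
proof -
  let ?A = "\<Sum>j<p. (ridge n p X y lam j)\<^sup>2" and ?B = "\<Sum>j<p. (ridge n p X y lam' j)\<^sup>2"
  let ?R = "(\<Sum>i<n. (y i)\<^sup>2) / (real n * lmin)"
  have norm_le: "(\<Sum>j<p. (ridge n p X y l j)\<^sup>2) \<le> ?R" if "lmin \<le> l" for l
  proof -
    have "(\<Sum>j<p. (ridge n p X y l j)\<^sup>2) \<le> (\<Sum>i<n. (y i)\<^sup>2) / (real n * l)"
      using ridge_norm_le[OF assms(1)] assms(2) that by simp
    also have "\<dots> \<le> ?R"
      using assms(1,2) that by (intro divide_left_mono mult_left_mono mult_pos_pos sum_nonneg) auto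
    finally show ?thesis .
  qed
  have "0 \<le> ?A" "0 \<le> ?B"
    by (simp_all add: sum_nonneg)
  then have "\<bar>?A - ?B\<bar> \<le> ?R"
    using norm_le[OF assms(3)] norm_le[OF assms(4)] unfolding abs_le_iff by linarith
  have "(lam' - lam) * (?A - ?B) \<le> \<bar>lam - lam'\<bar> * \<bar>?A - ?B\<bar>"
    by (metis abs_ge_self abs_minus_commute abs_mult)
  also have "\<dots> \<le> \<bar>lam - lam'\<bar> * ?R"
    using \<open>\<bar>?A - ?B\<bar> \<le> ?R\<close> by (rule mult_left_mono) simp
  finally have gap: "(lam' - lam) / 2 * (?A - ?B) \<le> ?R / 2 * \<bar>lam - lam'\<bar>"
    by (simp add: mult.commute)
  have "ridge_obj n p X y lam' (ridge n p X y lam) = ridge_obj n p X y lam (ridge n p X y lam) + (lam' - lam) / 2 * ?A"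
    by (rule ridge_obj_change_lambda)
  also have "\<dots> \<le> ridge_obj n p X y lam (ridge n p X y lam') + (lam' - lam) / 2 * ?A"
    using ridge_obj_ridge_le[OF assms(1)] assms(2,3) by simp
  also have "\<dots> = ridge_obj n p X y lam' (ridge n p X y lam') + (lam' - lam) / 2 * (?A - ?B)"
    unfolding ridge_obj_change_lambda[of n p X y lam "ridge n p X y lam'" lam'] by (simp add: field_simps)
  also have "\<dots> \<le> ridge_obj n p X y lam' (ridge n p X y lam') + ?R / 2 * \<bar>lam - lam'\<bar>"
    using gap by simp
  finally show ?thesis
    by simp
qed

lemma costC_what_eq_ridge_obj:
  "costC n p X z \<sigma> \<beta> lam' (what n p X z \<sigma> \<beta> lam)
   = ridge_obj n p X (resp p X \<beta> \<sigma> z) lam' (ridge n p X (resp p X \<beta> \<sigma> z) lam)"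
proof -
  let ?b = "ridge n p X (resp p X \<beta> \<sigma> z) lam"
  have square_flip: "(a - b - c)\<^sup>2 = (b + c - a)\<^sup>2" for a b c :: real
    by (simp add: power2_eq_square algebra_simps)
  have "((\<Sum>j<p. X i j * (?b j - \<beta> j)) - \<sigma> * z i)\<^sup>2 = (resp p X \<beta> \<sigma> z i - (\<Sum>j<p. X i j * ?b j))\<^sup>2" for i
    by (simp add: resp_def right_diff_distrib sum_subtractf square_flip)
  then show ?thesis
    by (simp add: costC_def ridge_obj_def what_def)
qed

lemma det_eq_sum_permutations:
  assumes "A \<in> carrier_mat m m"
  shows "det A = (\<Sum>\<pi> | \<pi> permutes {0..<m}. of_int (sign \<pi>) * (\<Prod>i = 0..<m. A $$ (i, \<pi> i)))"
  using assms unfolding Determinant.det_def by auto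

lemma borel_measurable_det:
  fixes A :: "'a \<Rightarrow> real mat"
  assumes "\<And>\<omega>. A \<omega> \<in> carrier_mat m m"
    and "\<And>i k. i < m \<Longrightarrow> k < m \<Longrightarrow> (\<lambda>\<omega>. A \<omega> $$ (i, k)) \<in> borel_measurable M"
  shows "(\<lambda>\<omega>. det (A \<omega>)) \<in> borel_measurable M"
  unfolding det_eq_sum_permutations[OF assms(1)]
  by (intro borel_measurable_sum borel_measurable_times borel_measurable_const borel_measurable_prod
      assms(2)) (auto dest: permutes_in_image)

lemma continuous_on_det:
  fixes A :: "'a::topological_space \<Rightarrow> real mat"
  assumes "\<And>x. A x \<in> carrier_mat m m"
    and "\<And>i k. i < m \<Longrightarrow> k < m \<Longrightarrow> continuous_on S (\<lambda>x. A x $$ (i, k))"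
  shows "continuous_on S (\<lambda>x. det (A x))"
  unfolding det_eq_sum_permutations[OF assms(1)]
  by (intro continuous_intros assms(2)) (auto dest: permutes_in_image)

lemma replace_col_carrier [simp]: "A \<in> carrier_mat m m \<Longrightarrow> replace_col A b k \<in> carrier_mat m m"
  by (simp add: replace_col_def)

lemma index_replace_col [simp]:
  "i < dim_row A \<Longrightarrow> j < dim_col A \<Longrightarrow> replace_col A b k $$ (i, j) = (if j = k then b $ i else A $$ (i, j))"
  by (simp add: replace_col_def)

lemma continuous_on_ridge:
  assumes "n > 0"
  shows "continuous_on {0<..} (\<lambda>lam. ridge n p X y lam j)"
proof -
  have "continuous_on {0<..} (\<lambda>lam. det (replace_col (ridge_mat n p X lam) (Matrix.vec p (normal_rhs n X y)) j)
      / det (ridge_mat n p X lam))"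
  proof (intro continuous_on_divide continuous_on_det[where m=p])
    fix i k
    assume "i < p" "k < p"
    then show "continuous_on {0<..} (\<lambda>lam. ridge_mat n p X lam $$ (i, k))"
      by (cases "i = k") (auto intro: continuous_intros)
    then show "continuous_on {0<..} (\<lambda>lam. replace_col (ridge_mat n p X lam) (Matrix.vec p (normal_rhs n X y)) j $$ (i, k))"
      using \<open>i < p\<close> \<open>k < p\<close> by (cases "k = j") auto
  qed (simp_all add: det_ridge_mat_nonzero)
  then have "continuous_on {0<..} (\<lambda>lam. ridge_cramer n p X y lam j)"
    by (cases "j < p") (simp_all add: ridge_cramer_def)
  then show ?thesis
    by (rule continuous_on_eq) (simp add: ridge_eq_ridge_cramer[OF assms])
qed

lemma borel_measurable_ridge:
  assumes "n > 0" "lam > 0"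
    and [measurable]: "\<And>i j. (\<lambda>\<omega>. X \<omega> i j) \<in> borel_measurable M" "\<And>i. (\<lambda>\<omega>. y \<omega> i) \<in> borel_measurable M"
  shows "(\<lambda>\<omega>. ridge n p (X \<omega>) (y \<omega>) lam j) \<in> borel_measurable M"
proof -
  have "(\<lambda>\<omega>. det (replace_col (ridge_mat n p (X \<omega>) lam) (Matrix.vec p (normal_rhs n (X \<omega>) (y \<omega>))) j)
      / det (ridge_mat n p (X \<omega>) lam)) \<in> borel_measurable M"
  proof (intro borel_measurable_divide borel_measurable_det[where m=p])
    fix i k
    assume "i < p" "k < p"
    then show "(\<lambda>\<omega>. ridge_mat n p (X \<omega>) lam $$ (i, k)) \<in> borel_measurable M"
      by (simp add: gram_def)
    then show "(\<lambda>\<omega>. replace_col (ridge_mat n p (X \<omega>) lam) (Matrix.vec p (normal_rhs n (X \<omega>) (y \<omega>))) j $$ (i, k))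
        \<in> borel_measurable M"
      using \<open>i < p\<close> \<open>k < p\<close> by (cases "k = j") (auto simp: normal_rhs_def)
  qed simp_all
  then show ?thesis
    unfolding ridge_eq_ridge_cramer[OF assms(1,2)] by (cases "j < p") (simp_all add: ridge_cramer_def)
qed

section \<open>The Gaussian design\<close>

lemma prob_space_N01: "prob_space N01"
  unfolding N01_def by (rule prob_space_normal_density) simp

lemma sets_N01 [simp, measurable_cong]: "sets N01 = sets borel"
  by (simp add: N01_def)

lemma space_N01 [simp]: "space N01 = UNIV"
  by (simp add: N01_def)

lemma prob_space_PiM_N01: "prob_space (PiM I (\<lambda>_. N01))"
  by (rule prob_space_PiM) (rule prob_space_N01)

lemma prob_space_gauss_meas: "prob_space (gauss_meas n p)"
  unfolding gauss_meas_def by (rule prob_space_PiM_N01)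

lemma finite_gauss_idx: "finite (gauss_idx n p)"
  by (simp add: gauss_idx_def)

text \<open>Outside \<open>I\<close> the coordinate is the constant \<^term>\<open>undefined\<close> on the whole space.\<close>

lemma measurable_component_N01: "(\<lambda>\<omega>. \<omega> k) \<in> measurable (PiM I (\<lambda>_. N01)) N01"
proof (cases "k \<in> I")
  case True
  then show ?thesis
    by (rule measurable_component_singleton)
next
  case False
  then have "\<omega> k = undefined" if "\<omega> \<in> space (PiM I (\<lambda>_. N01))" for \<omega>
    using that by (auto simp: space_PiM PiE_def extensional_def)
  then have "(\<lambda>\<omega>. \<omega> k) \<in> measurable (PiM I (\<lambda>_. N01)) N01
      \<longleftrightarrow> (\<lambda>_. undefined) \<in> measurable (PiM I (\<lambda>_. N01)) N01"
    by (rule measurable_cong)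
  then show ?thesis
    by simp
qed

lemma borel_measurable_component_N01 [measurable]: "(\<lambda>\<omega>. \<omega> k) \<in> borel_measurable (PiM I (\<lambda>_. N01))"
  using measurable_component_N01 by (simp add: measurable_cong_sets[OF refl sets_N01])

lemma indep_vars_components_N01:
  assumes "I \<noteq> {}"
  shows "prob_space.indep_vars (PiM I (\<lambda>_. N01)) (\<lambda>_. N01) (\<lambda>k \<omega>. \<omega> k) I"
proof -
  interpret prob_space "PiM I (\<lambda>_. N01)"
    by (rule prob_space_PiM_N01)
  have "distr (PiM I (\<lambda>_. N01)) (PiM I (\<lambda>_. N01)) (\<lambda>\<omega>. \<lambda>k\<in>I. \<omega> k)
      = distr (PiM I (\<lambda>_. N01)) (PiM I (\<lambda>_. N01)) (\<lambda>\<omega>. \<omega>)"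
    by (rule distr_cong) (auto simp: space_PiM PiE_def extensional_def restrict_def)
  also have "\<dots> = PiM I (\<lambda>k. distr (PiM I (\<lambda>_. N01)) N01 (\<lambda>\<omega>. \<omega> k))"
    by (auto intro!: PiM_cong simp: distr_PiM_component[OF prob_space_N01])
  finally show ?thesis
    by (subst indep_vars_iff_distr_eq_PiM'[OF assms]) (auto intro: measurable_component_N01)
qed

lemma indep_var_PiM_N01_blocks:
  assumes "I \<noteq> {}" "A \<inter> B = {}" "A \<subseteq> I" "B \<subseteq> I"
    and "f \<in> borel_measurable (PiM A (\<lambda>_. N01))" "g \<in> borel_measurable (PiM B (\<lambda>_. N01))"
  shows "prob_space.indep_var (PiM I (\<lambda>_. N01)) borel (\<lambda>\<omega>. f (restrict \<omega> A)) borel (\<lambda>\<omega>. g (restrict \<omega> B))"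
proof -
  interpret prob_space "PiM I (\<lambda>_. N01)"
    by (rule prob_space_PiM_N01)
  have "indep_var (PiM A (\<lambda>_. N01)) (\<lambda>\<omega>. restrict (\<lambda>k. \<omega> k) A) (PiM B (\<lambda>_. N01)) (\<lambda>\<omega>. restrict (\<lambda>k. \<omega> k) B)"
    by (rule indep_var_restrict[OF indep_vars_components_N01[OF assms(1)] assms(2-4)])
  from indep_var_compose[OF this assms(5,6)] show ?thesis
    by (simp add: comp_def)
qed

lemma distributed_component_N01:
  assumes "k \<in> I"
  shows "distributed (PiM I (\<lambda>_. N01)) lborel (\<lambda>\<omega>. \<omega> k) (\<lambda>x. ennreal (std_normal_density x))"
  unfolding distributed_def
proof (intro conjI)
  have "distr (PiM I (\<lambda>_. N01)) lborel (\<lambda>\<omega>. \<omega> k) = distr (PiM I (\<lambda>_. N01)) N01 (\<lambda>\<omega>. \<omega> k)"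
    by (rule distr_cong) auto
  also have "\<dots> = N01"
    by (rule distr_PiM_component[OF prob_space_N01 assms])
  finally show "distr (PiM I (\<lambda>_. N01)) lborel (\<lambda>\<omega>. \<omega> k) = density lborel (\<lambda>x. ennreal (std_normal_density x))"
    by (simp add: N01_def)
qed simp_all

lemma (in prob_space) normal_distributed_even_moments:
  assumes "0 < s" "distributed M lborel X (\<lambda>x. ennreal (normal_density 0 s x))"
  shows "integrable M (\<lambda>x. (X x)\<^sup>2)" "expectation (\<lambda>x. (X x)\<^sup>2) = s\<^sup>2"
    and "integrable M (\<lambda>x. (X x) ^ 4)" "expectation (\<lambda>x. (X x) ^ 4) = 3 * (s\<^sup>2)\<^sup>2"
proof -
  have nonneg: "\<And>x. 0 \<le> normal_density 0 s x"
    by (rule normal_density_nonneg)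
  have "has_bochner_integral lborel (\<lambda>x. normal_density 0 s x * x\<^sup>2) (s\<^sup>2)"
    using normal_moment_even[OF assms(1), where k=1 and \<mu>=0] by simp
  then show "integrable M (\<lambda>x. (X x)\<^sup>2)" "expectation (\<lambda>x. (X x)\<^sup>2) = s\<^sup>2"
    using distributed_integrable[OF assms(2), of "\<lambda>x. x\<^sup>2"] distributed_integral[OF assms(2), of "\<lambda>x. x\<^sup>2"]
      nonneg by (auto simp: has_bochner_integral_iff)
  have "has_bochner_integral lborel (\<lambda>x. normal_density 0 s x * x ^ 4) (3 * (s\<^sup>2)\<^sup>2)"
    using normal_moment_even[OF assms(1), where k=2 and \<mu>=0] assms(1)
    by (simp add: fact_numeral field_simps power2_eq_square power4_eq_xxxx)
  then show "integrable M (\<lambda>x. (X x) ^ 4)" "expectation (\<lambda>x. (X x) ^ 4) = 3 * (s\<^sup>2)\<^sup>2"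
    using distributed_integrable[OF assms(2), of "\<lambda>x. x ^ 4"] distributed_integral[OF assms(2), of "\<lambda>x. x ^ 4"]
      nonneg by (auto simp: has_bochner_integral_iff)
qed

lemma distributed_lincomb_N01:
  fixes c :: "'i \<Rightarrow> real"
  assumes "finite J" "J \<noteq> {}" "J \<subseteq> I" "\<And>k. k \<in> J \<Longrightarrow> c k \<noteq> 0"
  shows "distributed (PiM I (\<lambda>_. N01)) lborel (\<lambda>\<omega>. \<Sum>k\<in>J. c k * \<omega> k)
    (\<lambda>x. ennreal (normal_density 0 (sqrt (\<Sum>k\<in>J. (c k)\<^sup>2)) x))"
proof -
  interpret prob_space "PiM I (\<lambda>_. N01)"
    by (rule prob_space_PiM_N01)
  have "I \<noteq> {}"
    using assms(2,3) by blast
  then have indep: "indep_vars (\<lambda>_. borel) (\<lambda>k \<omega>. c k * \<omega> k) J"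
    using indep_vars_compose2[OF indep_vars_subset[OF indep_vars_components_N01 assms(3)], of "\<lambda>k x. c k * x"]
    by (simp add: measurable_cong_sets[OF sets_N01 refl])
  have "distributed (PiM I (\<lambda>_. N01)) lborel (\<lambda>\<omega>. c k * \<omega> k) (\<lambda>x. ennreal (normal_density 0 \<bar>c k\<bar> x))"
    if "k \<in> J" for k
    using normal_density_affine[OF distributed_component_N01, where \<alpha>="c k" and \<beta>=0] assms(3,4) that
    by auto
  then have "distributed (PiM I (\<lambda>_. N01)) lborel (\<lambda>\<omega>. \<Sum>k\<in>J. c k * \<omega> k)
      (\<lambda>x. ennreal (normal_density (\<Sum>k\<in>J. 0) (sqrt (\<Sum>k\<in>J. \<bar>c k\<bar>\<^sup>2)) x))"
    by (intro sum_indep_normal[OF assms(1,2) indep]) (auto simp: assms(4))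
  then show ?thesis
    by simp
qed

text \<open>Zero coefficients are discarded first, since the sum rule for independent normals needs
  positive standard deviations.\<close>

lemma lincomb_N01_moments:
  fixes c :: "'i \<Rightarrow> real"
  assumes "finite I" "J \<subseteq> I"
  defines "S \<equiv> \<Sum>k\<in>J. (c k)\<^sup>2"
  shows "integrable (PiM I (\<lambda>_. N01)) (\<lambda>\<omega>. (\<Sum>k\<in>J. c k * \<omega> k)\<^sup>2)" (is ?int2)
    and "(\<integral>\<omega>. (\<Sum>k\<in>J. c k * \<omega> k)\<^sup>2 \<partial>PiM I (\<lambda>_. N01)) = S" (is ?mom2)
    and "integrable (PiM I (\<lambda>_. N01)) (\<lambda>\<omega>. (\<Sum>k\<in>J. c k * \<omega> k) ^ 4)" (is ?int4)
    and "(\<integral>\<omega>. (\<Sum>k\<in>J. c k * \<omega> k) ^ 4 \<partial>PiM I (\<lambda>_. N01)) = 3 * S\<^sup>2" (is ?mom4)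
proof -
  interpret prob_space "PiM I (\<lambda>_. N01)"
    by (rule prob_space_PiM_N01)
  define J' where "J' = {k\<in>J. c k \<noteq> 0}"
  have "J' \<subseteq> I"
    using assms(2) by (auto simp: J'_def)
  then have J': "finite J'" "J' \<subseteq> I"
    using finite_subset[OF _ assms(1)] by auto
  have lincomb: "(\<Sum>k\<in>J. c k * \<omega> k) = (\<Sum>k\<in>J'. c k * \<omega> k)" for \<omega>
    using assms(1,2) finite_subset by (intro sum.mono_neutral_right) (auto simp: J'_def)
  have S: "S = (\<Sum>k\<in>J'. (c k)\<^sup>2)"
    unfolding S_def using assms(1,2) finite_subset by (intro sum.mono_neutral_right) (auto simp: J'_def)
  have "?int2 \<and> ?mom2 \<and> ?int4 \<and> ?mom4"
  proof (cases "J' = {}")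
    case True
    then show ?thesis
      by (simp add: lincomb S)
  next
    case False
    then have "0 < sqrt S"
      unfolding S using J'(1) by (intro real_sqrt_gt_zero sum_pos) (auto simp: J'_def)
    with distributed_lincomb_N01[OF J'(1) False J'(2), of c] show ?thesis
      using normal_distributed_even_moments[of "sqrt S"] by (simp add: lincomb S J'_def)
  qed
  then show ?int2 ?mom2 ?int4 ?mom4
    by auto
qed

section \<open>Measurability of the event\<close>

lemma sets_Collect_forall_closure:
  fixes f :: "'b::metric_space \<Rightarrow> 'a \<Rightarrow> real"
  assumes "countable D"
    and "\<And>\<omega>. \<omega> \<in> space M \<Longrightarrow> continuous_on (closure D) (\<lambda>x. f x \<omega>)"
    and "\<And>x. x \<in> D \<Longrightarrow> f x \<in> borel_measurable M"
  shows "{\<omega> \<in> space M. \<forall>x\<in>closure D. f x \<omega> \<le> 0} \<in> sets M"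
proof -
  have "f x \<omega> \<le> 0" if "\<omega> \<in> space M" "x \<in> closure D" "\<forall>x\<in>D. f x \<omega> \<le> 0" for x \<omega>
    using continuous_le_on_closure[OF assms(2)[OF that(1)] that(2)] that(3) by blast
  then have "{\<omega> \<in> space M. \<forall>x\<in>closure D. f x \<omega> \<le> 0} = {\<omega> \<in> space M. \<forall>x\<in>D. f x \<omega> \<le> 0}"
    using closure_subset by blast
  also have "\<dots> \<in> sets M"
  proof (intro sets.sets_Collect_countable_All' assms(1))
    fix x
    assume "x \<in> D"
    then have [measurable]: "f x \<in> borel_measurable M"
      by (rule assms(3))
    show "{\<omega> \<in> space M. f x \<omega> \<le> 0} \<in> sets M"
      by measurable
  qed
  finally show ?thesis .
qed

lemma closure_insert_Icc_Int_Rats: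
  fixes a b :: real
  assumes "a \<le> b"
  shows "closure (insert a ({a..b} \<inter> \<rat>)) = {a..b}"
proof (rule antisym)
  show "closure (insert a ({a..b} \<inter> \<rat>)) \<subseteq> {a..b}"
    using assms by (intro closure_minimal) auto
  show "{a..b} \<subseteq> closure (insert a ({a..b} \<inter> \<rat>))"
  proof (cases "a = b")
    case False
    have "{a<..<b} \<subseteq> closure ({a<..<b} \<inter> \<rat>)"
      using open_Int_closure_subset[of "{a<..<b}" \<rat>] by (simp add: Rats_closure_real)
    then have "closure {a<..<b} \<subseteq> closure ({a<..<b} \<inter> \<rat>)"
      by (simp add: closure_minimal)
    also have "\<dots> \<subseteq> closure (insert a ({a..b} \<inter> \<rat>))"
      by (intro closure_mono) auto
    finally show ?thesis
      using assms False by simp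
  qed (simp add: closure_subset[THEN subsetD])
qed

lemma sets_ridge_cost_event:
  assumes "n > 0" "0 < a" "a \<le> b"
  shows "{\<omega> \<in> space (gauss_meas n p). \<forall>lam\<in>{a..b}. \<forall>lam'\<in>{a..b}.
      costC n p (Xof \<omega>) (zof \<omega>) \<sigma> \<beta> lam' (what n p (Xof \<omega>) (zof \<omega>) \<sigma> \<beta> lam)
      \<le> costC n p (Xof \<omega>) (zof \<omega>) \<sigma> \<beta> lam' (what n p (Xof \<omega>) (zof \<omega>) \<sigma> \<beta> lam') + K * \<bar>lam - lam'\<bar>}
    \<in> sets (gauss_meas n p)"
proof -
  let ?M = "gauss_meas n p"
  let ?y = "\<lambda>\<omega>. resp p (Xof \<omega>) \<beta> \<sigma> (zof \<omega>)"
  define D where "D = insert a ({a..b} \<inter> \<rat>)"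
  define f where "f x \<omega> =
    ridge_obj n p (Xof \<omega>) (?y \<omega>) (snd x) (ridge n p (Xof \<omega>) (?y \<omega>) (fst x))
    - ridge_obj n p (Xof \<omega>) (?y \<omega>) (snd x) (ridge n p (Xof \<omega>) (?y \<omega>) (snd x))
    - K * \<bar>fst x - snd x\<bar>" for x :: "real \<times> real" and \<omega>
  have closure_D: "closure (D \<times> D) = {a..b} \<times> {a..b}"
    unfolding D_def closure_Times closure_insert_Icc_Int_Rats[OF assms(3)] ..
  have "{a..b} \<times> {a..b} \<subseteq> {0<..} \<times> {0<..}"
    using assms(2) by auto
  then have ridge_cont: "continuous_on ({a..b} \<times> {a..b}) (\<lambda>x. ridge n p X y (fst x) j)"
    "continuous_on ({a..b} \<times> {a..b}) (\<lambda>x. ridge n p X y (snd x) j)" for X y j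
    by (auto intro!: continuous_on_compose2[OF continuous_on_ridge[OF assms(1)]] continuous_intros)
  have "continuous_on (closure (D \<times> D)) (\<lambda>x. f x \<omega>)" for \<omega>
    unfolding closure_D f_def ridge_obj_def by (intro continuous_intros ridge_cont) (use assms(1) in auto)
  moreover have "f x \<in> borel_measurable ?M" if "x \<in> D \<times> D" for x
  proof -
    have "0 < fst x" "0 < snd x"
      using that assms(2) by (auto simp: D_def)
    then show ?thesis
      unfolding f_def ridge_obj_def gauss_meas_def
      by (intro borel_measurable_diff borel_measurable_add borel_measurable_times borel_measurable_divide
          borel_measurable_sum borel_measurable_power borel_measurable_const borel_measurable_abs
          borel_measurable_ridge[OF assms(1)])
        (auto simp: Xof_def zof_def resp_def)
  qed
  moreover have "countable (D \<times> D)"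
    by (simp add: D_def countable_rat)
  ultimately have "{\<omega> \<in> space ?M. \<forall>x\<in>closure (D \<times> D). f x \<omega> \<le> 0} \<in> sets ?M"
    by (intro sets_Collect_forall_closure) auto
  then show ?thesis
    by (simp add: closure_D f_def costC_what_eq_ridge_obj diff_le_eq add.commute)
qed

section \<open>Concentration of the response norm\<close>

lemma (in prob_space) expectation_square_sum_indep:
  fixes W :: "'i \<Rightarrow> 'a \<Rightarrow> real"
  assumes "finite I"
    and W_measurable: "\<And>i. i \<in> I \<Longrightarrow> W i \<in> borel_measurable M"
    and square_int: "\<And>i. i \<in> I \<Longrightarrow> integrable M (\<lambda>x. (W i x)\<^sup>2)"
    and centered: "\<And>i. i \<in> I \<Longrightarrow> expectation (W i) = 0"
    and indep: "\<And>i j. i \<in> I \<Longrightarrow> j \<in> I \<Longrightarrow> i \<noteq> j \<Longrightarrow> indep_var borel (W i) borel (W j)"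
  shows "integrable M (\<lambda>x. (\<Sum>i\<in>I. W i x)\<^sup>2)"
    and "expectation (\<lambda>x. (\<Sum>i\<in>I. W i x)\<^sup>2) = (\<Sum>i\<in>I. expectation (\<lambda>x. (W i x)\<^sup>2))"
proof -
  have int: "integrable M (W i)" if "i \<in> I" for i
    using square_integrable_imp_integrable[OF W_measurable[OF that] square_int[OF that]] .
  have prod: "integrable M (\<lambda>x. W i x * W j x)
      \<and> expectation (\<lambda>x. W i x * W j x) = (if i = j then expectation (\<lambda>x. (W i x)\<^sup>2) else 0)"
    if "i \<in> I" "j \<in> I" for i j
  proof (cases "i = j")
    case True
    then show ?thesis
      using square_int[OF that(1)] by (simp add: power2_eq_square)
  next
    case False
    then show ?thesis
      using indep_var_integrable[OF indep[OF that False] int[OF that(1)] int[OF that(2)]]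
        indep_var_lebesgue_integral[OF indep[OF that False] int[OF that(1)] int[OF that(2)]]
        centered[OF that(1)] by simp
  qed
  have square: "(\<Sum>i\<in>I. W i x)\<^sup>2 = (\<Sum>i\<in>I. \<Sum>j\<in>I. W i x * W j x)" for x
    by (simp add: power2_eq_square sum_product)
  show "integrable M (\<lambda>x. (\<Sum>i\<in>I. W i x)\<^sup>2)"
    unfolding square using prod by (intro Bochner_Integration.integrable_sum) blast
  have int_row: "integrable M (\<lambda>x. \<Sum>j\<in>I. W i x * W j x)" if "i \<in> I" for i
    using prod that by (intro Bochner_Integration.integrable_sum) blast
  have "expectation (\<lambda>x. (\<Sum>i\<in>I. W i x)\<^sup>2) = (\<Sum>i\<in>I. expectation (\<lambda>x. \<Sum>j\<in>I. W i x * W j x))"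
    unfolding square by (rule Bochner_Integration.integral_sum) (rule int_row)
  also have "\<dots> = (\<Sum>i\<in>I. \<Sum>j\<in>I. if i = j then expectation (\<lambda>x. (W i x)\<^sup>2) else 0)"
  proof (rule sum.cong[OF refl])
    fix i
    assume "i \<in> I"
    then show "expectation (\<lambda>x. \<Sum>j\<in>I. W i x * W j x) = (\<Sum>j\<in>I. if i = j then expectation (\<lambda>x. (W i x)\<^sup>2) else 0)"
      using prod by (subst Bochner_Integration.integral_sum) (auto intro: sum.cong)
  qed
  also have "\<dots> = (\<Sum>i\<in>I. expectation (\<lambda>x. (W i x)\<^sup>2))"
    using assms(1) by simp
  finally show "expectation (\<lambda>x. (\<Sum>i\<in>I. W i x)\<^sup>2) = (\<Sum>i\<in>I. expectation (\<lambda>x. (W i x)\<^sup>2))" .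
qed

definition row_block :: "nat \<Rightarrow> nat \<Rightarrow> ((nat \<times> nat) + nat) set" where
  "row_block p i = insert (Inr i) ((\<lambda>j. Inl (i, j)) ` {..<p})"

definition row_coeff :: "(nat \<Rightarrow> real) \<Rightarrow> real \<Rightarrow> (nat \<times> nat) + nat \<Rightarrow> real" where
  "row_coeff \<beta> \<sigma> k = (case k of Inl ij \<Rightarrow> \<beta> (snd ij) | Inr _ \<Rightarrow> \<sigma>)"

lemma sum_row_block: "(\<Sum>k\<in>row_block p i. f k) = f (Inr i) + (\<Sum>j<p. f (Inl (i, j)))"
proof -
  have "inj_on (\<lambda>j. Inl (i, j) :: (nat \<times> nat) + nat) {..<p}"
    by (auto simp: inj_on_def)
  then show ?thesis
    unfolding row_block_def by (subst sum.insert) (auto simp: sum.reindex)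
qed

lemma resp_eq_row_sum: "resp p (Xof \<omega>) \<beta> \<sigma> (zof \<omega>) i = (\<Sum>k\<in>row_block p i. row_coeff \<beta> \<sigma> k * \<omega> k)"
  by (simp add: sum_row_block resp_def Xof_def zof_def row_coeff_def mult.commute)

lemma row_block_subset: "i < n \<Longrightarrow> row_block p i \<subseteq> gauss_idx n p"
  by (auto simp: row_block_def gauss_idx_def)

lemma row_block_disjoint: "i \<noteq> i' \<Longrightarrow> row_block p i \<inter> row_block p i' = {}"
  by (auto simp: row_block_def)

lemma indep_var_resp_rows:
  assumes "i < n" "i' < n" "i \<noteq> i'" "g \<in> borel_measurable borel" "h \<in> borel_measurable borel"
  shows "prob_space.indep_var (gauss_meas n p)
    borel (\<lambda>\<omega>. g (resp p (Xof \<omega>) \<beta> \<sigma> (zof \<omega>) i)) borel (\<lambda>\<omega>. h (resp p (Xof \<omega>) \<beta> \<sigma> (zof \<omega>) i'))"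
proof -
  define row where "row i x = (\<Sum>k\<in>row_block p i. row_coeff \<beta> \<sigma> k * x k)"
    for i and x :: "(nat \<times> nat) + nat \<Rightarrow> real"
  have row_measurable: "row i \<in> borel_measurable (PiM (row_block p i) (\<lambda>_. N01))" for i
    unfolding row_def[abs_def] by measurable
  have resp_eq: "resp p (Xof \<omega>) \<beta> \<sigma> (zof \<omega>) i = row i (restrict \<omega> (row_block p i))" for i \<omega>
    by (simp add: row_def resp_eq_row_sum)
  have "gauss_idx n p \<noteq> {}"
    using assms(1) by (auto simp: gauss_idx_def)
  from indep_var_PiM_N01_blocks[OF this row_block_disjoint[OF assms(3)] row_block_subset[OF assms(1)]
      row_block_subset[OF assms(2)] measurable_comp[OF row_measurable assms(4)]
      measurable_comp[OF row_measurable assms(5)]]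
  show ?thesis
    by (simp add: resp_eq gauss_meas_def comp_def)
qed

text \<open>Each response is centred normal with variance \<open>s\<close>, so its square has mean \<open>s\<close> and variance
  \<open>3 s\<^sup>2 - s\<^sup>2\<close>.\<close>

lemma resp_square_moments:
  fixes p :: nat and \<beta> :: "nat \<Rightarrow> real" and \<sigma> :: real
  assumes "i < n"
  defines "s \<equiv> (\<Sum>j<p. (\<beta> j)\<^sup>2) + \<sigma>\<^sup>2"
  defines "W \<equiv> \<lambda>\<omega>. (resp p (Xof \<omega>) \<beta> \<sigma> (zof \<omega>) i)\<^sup>2 - s"
  shows "integrable (gauss_meas n p) (\<lambda>\<omega>. (W \<omega>)\<^sup>2)"
    and "(\<integral>\<omega>. W \<omega> \<partial>gauss_meas n p) = 0"
    and "(\<integral>\<omega>. (W \<omega>)\<^sup>2 \<partial>gauss_meas n p) = 2 * s\<^sup>2"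
proof -
  interpret prob_space "gauss_meas n p"
    by (rule prob_space_gauss_meas)
  let ?Y = "\<lambda>\<omega>. \<Sum>k\<in>row_block p i. row_coeff \<beta> \<sigma> k * \<omega> k"
  have coeff_sq: "(\<Sum>k\<in>row_block p i. (row_coeff \<beta> \<sigma> k)\<^sup>2) = s"
    by (simp add: s_def sum_row_block row_coeff_def)
  have Y: "integrable (gauss_meas n p) (\<lambda>\<omega>. (?Y \<omega>)\<^sup>2)" "expectation (\<lambda>\<omega>. (?Y \<omega>)\<^sup>2) = s"
    "integrable (gauss_meas n p) (\<lambda>\<omega>. (?Y \<omega>) ^ 4)" "expectation (\<lambda>\<omega>. (?Y \<omega>) ^ 4) = 3 * s\<^sup>2"
    using lincomb_N01_moments[OF finite_gauss_idx row_block_subset[OF assms(1)], where c="row_coeff \<beta> \<sigma>"]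
    by (simp_all add: coeff_sq gauss_meas_def)
  have W: "W \<omega> = (?Y \<omega>)\<^sup>2 - s" for \<omega>
    by (simp add: W_def resp_eq_row_sum)
  have W_square: "(W \<omega>)\<^sup>2 = (?Y \<omega>) ^ 4 - 2 * s * (?Y \<omega>)\<^sup>2 + s\<^sup>2" for \<omega>
    unfolding W by (simp add: power2_eq_square power4_eq_xxxx algebra_simps)
  show "integrable (gauss_meas n p) (\<lambda>\<omega>. (W \<omega>)\<^sup>2)"
    unfolding W_square using Y by simp
  show "expectation W = 0"
    unfolding W using Y by (simp add: prob_space)
  show "expectation (\<lambda>\<omega>. (W \<omega>)\<^sup>2) = 2 * s\<^sup>2"
    unfolding W_square using Y by (simp add: prob_space power2_eq_square)
qed

lemma measure_resp_norm_gt_le: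
  fixes p :: nat and \<beta> :: "nat \<Rightarrow> real" and \<sigma> M :: real
  defines "s \<equiv> (\<Sum>j<p. (\<beta> j)\<^sup>2) + \<sigma>\<^sup>2"
  assumes "n > 0" "s < M"
  shows "measure (gauss_meas n p)
      {\<omega> \<in> space (gauss_meas n p). real n * M < (\<Sum>i<n. (resp p (Xof \<omega>) \<beta> \<sigma> (zof \<omega>) i)\<^sup>2)}
    \<le> 2 * s\<^sup>2 / (real n * (M - s)\<^sup>2)"
proof -
  interpret prob_space "gauss_meas n p"
    by (rule prob_space_gauss_meas)
  define W where "W i \<omega> = (resp p (Xof \<omega>) \<beta> \<sigma> (zof \<omega>) i)\<^sup>2 - s" for i \<omega>
  have W_measurable [measurable]: "W i \<in> borel_measurable (gauss_meas n p)" for i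
    unfolding W_def[abs_def] resp_def Xof_def zof_def gauss_meas_def by measurable
  have indep: "indep_var borel (W i) borel (W i')" if "i \<in> {..<n}" "i' \<in> {..<n}" "i \<noteq> i'" for i i'
    using indep_var_resp_rows[of i n i' "\<lambda>t. t\<^sup>2 - s" "\<lambda>t. t\<^sup>2 - s"] that by (simp add: W_def[abs_def])
  have W_moments: "integrable (gauss_meas n p) (\<lambda>\<omega>. (W i \<omega>)\<^sup>2)"
    "expectation (W i) = 0" "expectation (\<lambda>\<omega>. (W i \<omega>)\<^sup>2) = 2 * s\<^sup>2" if "i \<in> {..<n}" for i
    using resp_square_moments[of i n p \<beta> \<sigma>] that by (simp_all add: W_def[abs_def] s_def)
  note sum_W_moments = expectation_square_sum_indep[OF finite_lessThan W_measurable W_moments(1,2) indep]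
  have sum_W: "integrable (gauss_meas n p) (\<lambda>\<omega>. (\<Sum>i<n. W i \<omega>)\<^sup>2)"
    "expectation (\<lambda>\<omega>. (\<Sum>i<n. W i \<omega>)\<^sup>2) = real n * (2 * s\<^sup>2)"
    using sum_W_moments sum.cong[OF refl W_moments(3), of "{..<n}"] by simp_all
  have a: "0 < real n * (M - s)"
    using assms(2,3) by simp
  have "(\<Sum>i<n. W i \<omega>) = (\<Sum>i<n. (resp p (Xof \<omega>) \<beta> \<sigma> (zof \<omega>) i)\<^sup>2) - real n * s" for \<omega>
    by (simp add: W_def sum_subtractf)
  then have "{\<omega> \<in> space (gauss_meas n p). real n * M < (\<Sum>i<n. (resp p (Xof \<omega>) \<beta> \<sigma> (zof \<omega>) i)\<^sup>2)}
      \<subseteq> {\<omega> \<in> space (gauss_meas n p). real n * (M - s) \<le> \<bar>\<Sum>i<n. W i \<omega>\<bar>}"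
    by (auto simp: right_diff_distrib)
  then have "measure (gauss_meas n p)
      {\<omega> \<in> space (gauss_meas n p). real n * M < (\<Sum>i<n. (resp p (Xof \<omega>) \<beta> \<sigma> (zof \<omega>) i)\<^sup>2)}
    \<le> measure (gauss_meas n p) {\<omega> \<in> space (gauss_meas n p). real n * (M - s) \<le> \<bar>\<Sum>i<n. W i \<omega>\<bar>}"
    by (rule finite_measure_mono) measurable
  also have "\<dots> \<le> expectation (\<lambda>\<omega>. (\<Sum>i<n. W i \<omega>)\<^sup>2) / (real n * (M - s))\<^sup>2"
    by (rule second_moment_method[OF _ sum_W(1) a]) simp
  also have "\<dots> = 2 * s\<^sup>2 / (real n * (M - s)\<^sup>2)"
    unfolding sum_W(2) power_mult_distrib power2_eq_square[of "real n"] mult.assoc using assms(2) by simp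
  finally show ?thesis .
qed

lemma measure_ridge_cost_event_ge:
  fixes p :: nat and \<beta> :: "nat \<Rightarrow> real" and \<sigma> a b M :: real
  defines "s \<equiv> (\<Sum>j<p. (\<beta> j)\<^sup>2) + \<sigma>\<^sup>2"
  assumes "n > 0" "0 < a" "a \<le> b" "s < M"
  shows "1 - 2 * s\<^sup>2 / (real n * (M - s)\<^sup>2) \<le> measure (gauss_meas n p)
    {\<omega> \<in> space (gauss_meas n p). \<forall>lam\<in>{a..b}. \<forall>lam'\<in>{a..b}.
      costC n p (Xof \<omega>) (zof \<omega>) \<sigma> \<beta> lam' (what n p (Xof \<omega>) (zof \<omega>) \<sigma> \<beta> lam)
      \<le> costC n p (Xof \<omega>) (zof \<omega>) \<sigma> \<beta> lam' (what n p (Xof \<omega>) (zof \<omega>) \<sigma> \<beta> lam') + M / (2 * a) * \<bar>lam - lam'\<bar>}"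
    (is "_ \<le> measure _ ?E")
proof -
  interpret prob_space "gauss_meas n p"
    by (rule prob_space_gauss_meas)
  let ?y = "\<lambda>\<omega>. resp p (Xof \<omega>) \<beta> \<sigma> (zof \<omega>)"
  define G where "G = {\<omega> \<in> space (gauss_meas n p). (\<Sum>i<n. (?y \<omega> i)\<^sup>2) \<le> real n * M}"
  have G_sets: "G \<in> sets (gauss_meas n p)"
    unfolding G_def resp_def Xof_def zof_def gauss_meas_def by measurable
  have "G \<subseteq> ?E"
  proof (intro subsetI CollectI conjI ballI)
    fix \<omega> lam lam'
    assume \<omega>: "\<omega> \<in> G" and lam: "lam \<in> {a..b}" "lam' \<in> {a..b}"
    have "(\<Sum>i<n. (?y \<omega> i)\<^sup>2) / (2 * real n * a) \<le> M / (2 * a)"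
      using \<omega> assms(2,3) by (simp add: G_def field_simps)
    then have "(\<Sum>i<n. (?y \<omega> i)\<^sup>2) / (2 * real n * a) * \<bar>lam - lam'\<bar> \<le> M / (2 * a) * \<bar>lam - lam'\<bar>"
      by (rule mult_right_mono) simp
    with ridge_obj_ridge_lipschitz[OF assms(2,3), of lam lam' p "Xof \<omega>" "?y \<omega>"] lam
    show "costC n p (Xof \<omega>) (zof \<omega>) \<sigma> \<beta> lam' (what n p (Xof \<omega>) (zof \<omega>) \<sigma> \<beta> lam)
      \<le> costC n p (Xof \<omega>) (zof \<omega>) \<sigma> \<beta> lam' (what n p (Xof \<omega>) (zof \<omega>) \<sigma> \<beta> lam') + M / (2 * a) * \<bar>lam - lam'\<bar>"
      unfolding costC_what_eq_ridge_obj by simp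
  qed (use G_def in auto)
  then have "prob G \<le> prob ?E"
    by (intro finite_measure_mono sets_ridge_cost_event assms(2-4))
  moreover have "space (gauss_meas n p) - G
      = {\<omega> \<in> space (gauss_meas n p). real n * M < (\<Sum>i<n. (?y \<omega> i)\<^sup>2)}"
    by (auto simp: G_def)
  then have "prob G = 1 - prob {\<omega> \<in> space (gauss_meas n p). real n * M < (\<Sum>i<n. (?y \<omega> i)\<^sup>2)}"
    using prob_compl[OF G_sets] by simp
  ultimately show ?thesis
    using measure_resp_norm_gt_le[OF assms(2,5)[unfolded s_def]] unfolding s_def by linarith
qed

lemma ridge_cost_event_tendsto_1:
  fixes p :: "nat \<Rightarrow> nat" and \<beta> :: "nat \<Rightarrow> nat \<Rightarrow> real" and \<sigma> \<sigma>max lmin lmax L :: real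
  assumes "0 < lmin" "lmin \<le> lmax" "\<sigma>\<^sup>2 \<le> \<sigma>max\<^sup>2"
    and "(\<lambda>n. \<Sum>j<p n. (\<beta> n j)\<^sup>2) \<longlonglongrightarrow> L" "L \<le> \<sigma>max\<^sup>2"
  shows "(\<lambda>n. measure (gauss_meas n (p n))
      {\<omega> \<in> space (gauss_meas n (p n)). \<forall>lam \<in> {lmin..lmax}. \<forall>lam' \<in> {lmin..lmax}.
        costC n (p n) (Xof \<omega>) (zof \<omega>) \<sigma> (\<beta> n) lam' (what n (p n) (Xof \<omega>) (zof \<omega>) \<sigma> (\<beta> n) lam)
        \<le> costC n (p n) (Xof \<omega>) (zof \<omega>) \<sigma> (\<beta> n) lam' (what n (p n) (Xof \<omega>) (zof \<omega>) \<sigma> (\<beta> n) lam')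
          + (2 * \<sigma>max\<^sup>2 + 1) / (2 * lmin) * \<bar>lam - lam'\<bar>})
    \<longlonglongrightarrow> 1" (is "?prob \<longlonglongrightarrow> 1")
proof -
  define M where "M = 2 * \<sigma>max\<^sup>2 + 1"
  define s where "s n = (\<Sum>j<p n. (\<beta> n j)\<^sup>2) + \<sigma>\<^sup>2" for n
  have s_lim: "s \<longlonglongrightarrow> L + \<sigma>\<^sup>2"
    unfolding s_def by (intro tendsto_intros assms(4))
  have "L + \<sigma>\<^sup>2 < M"
    using assms(3,5) by (simp add: M_def)
  then have "eventually (\<lambda>n. s n < M) sequentially"
    by (rule order_tendstoD(2)[OF s_lim])
  then have "eventually (\<lambda>n. 1 - 2 * (s n)\<^sup>2 / (real n * (M - s n)\<^sup>2) \<le> ?prob n) sequentially"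
    using eventually_gt_at_top[of 0]
    by eventually_elim (use measure_ridge_cost_event_ge assms(1,2) in \<open>simp add: s_def M_def\<close>)
  moreover have "eventually (\<lambda>n. ?prob n \<le> 1) sequentially"
    by (intro always_eventually allI prob_space.prob_le_1 prob_space_gauss_meas)
  moreover have "(\<lambda>n. 2 * (s n)\<^sup>2 / (M - s n)\<^sup>2) \<longlonglongrightarrow> 2 * (L + \<sigma>\<^sup>2)\<^sup>2 / (M - (L + \<sigma>\<^sup>2))\<^sup>2"
    using \<open>L + \<sigma>\<^sup>2 < M\<close> by (intro tendsto_intros s_lim) simp
  then have "(\<lambda>n. 2 * (s n)\<^sup>2 / (M - s n)\<^sup>2 / real n) \<longlonglongrightarrow> 0"
    by (rule tendsto_divide_0[OF _ filterlim_at_top_imp_at_infinity[OF filterlim_real_sequentially]])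
  then have "(\<lambda>n. 1 - 2 * (s n)\<^sup>2 / (real n * (M - s n)\<^sup>2)) \<longlonglongrightarrow> 1"
    using tendsto_diff[OF tendsto_const, of _ 0 sequentially 1] by (simp add: mult.commute)
  ultimately show ?thesis
    by (rule tendsto_sandwich) simp
qed

theorem lemma11:
  fixes \<delta> \<sigma>max lmin lmax :: real
  assumes "\<delta> > 0" and "0 < lmin" and "lmin \<le> lmax"
  shows "\<exists>K > 0. \<forall>(p :: nat \<Rightarrow> nat) (\<beta> :: nat \<Rightarrow> nat \<Rightarrow> real) (\<sigma> :: real).
     (\<lambda>n. real (p n) / real n) \<longlonglongrightarrow> \<delta> \<longrightarrow>
     0 \<le> \<sigma> \<longrightarrow> \<sigma>\<^sup>2 \<le> \<sigma>max\<^sup>2 \<longrightarrow>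
     (\<exists>L. (\<lambda>n. \<Sum>j<p n. (\<beta> n j)\<^sup>2) \<longlonglongrightarrow> L \<and> L \<le> \<sigma>max\<^sup>2) \<longrightarrow>
     (\<lambda>n. measure (gauss_meas n (p n))
        {\<omega> \<in> space (gauss_meas n (p n)).
          \<forall>lam \<in> {lmin..lmax}. \<forall>lam' \<in> {lmin..lmax}.
            costC n (p n) (Xof \<omega>) (zof \<omega>) \<sigma> (\<beta> n) lam'
               (what n (p n) (Xof \<omega>) (zof \<omega>) \<sigma> (\<beta> n) lam)
            \<le> costC n (p n) (Xof \<omega>) (zof \<omega>) \<sigma> (\<beta> n) lam'
               (what n (p n) (Xof \<omega>) (zof \<omega>) \<sigma> (\<beta> n) lam')
              + K * \<bar>lam - lam'\<bar>})
     \<longlonglongrightarrow> 1"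
proof -
  have "0 < (2 * \<sigma>max\<^sup>2 + 1) / (2 * lmin)"
    using assms(2) by (simp add: add_nonneg_pos)
  then show ?thesis
    using ridge_cost_event_tendsto_1[OF assms(2,3)] by blast
qed

end
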